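(* Let $a \geq 1$ and consider the scalar system $X_{n+1} = a X_n + Z_n - U_n$, $n=1,2,\ldots$, where $X_1, Z_1, Z_2, \ldots$ are independent real random variables and $X_1$ has a probability density. If an $M$-bin causal quantizer-controller makes the system stabilizable in probability, i.e. there is a bounded interval $\mathcal I \subset \mathbb{R}$ with $\limsup_{n\to\infty} \mathbb{P}[X_n \in \mathcal I] > 0$, then $M \geq \lceil a \rceil$.
   Context: An $M$-bin causal quantizer-controller is a sequence $\{\mathsf f_n, \mathsf g_n\}_{n=1}^\infty$ of (measurable) maps $\mathsf f_n \colon \mathbb{R}^n \to [M] = \{1,\ldots,M\}$ and $\mathsf g_n \colon [M]^n \to \mathbb{R}$; the control at time $n$ is $U_n = \mathsf g_n(\mathsf f_1(X_1), \mathsf f_2(X_1,X_2), \ldots, \mathsf f_n(X_1,\ldots,X_n))$. *)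

theory Defs
  imports "HOL-Probability.Probability"
begin

text \<open>Vectors in R^k / [M]^k are represented as extensional functions on {1..k}.\<close>
definition qc_control ::
  "(nat \<Rightarrow> (nat \<Rightarrow> real) \<Rightarrow> nat) \<Rightarrow> (nat \<Rightarrow> (nat \<Rightarrow> nat) \<Rightarrow> real) \<Rightarrow> nat \<Rightarrow> (nat \<Rightarrow> real) \<Rightarrow> real"
  where "qc_control f g n x =
     g n (restrict (\<lambda>k. f k (restrict x {1..k})) {1..n})"

definition causal_quantizer :: "nat \<Rightarrow> (nat \<Rightarrow> (nat \<Rightarrow> real) \<Rightarrow> nat) \<Rightarrow> bool"
  where "causal_quantizer Mb f \<longleftrightarrow>
     (\<forall>n\<ge>1. f n \<in> PiM {1..n} (\<lambda>_. borel) \<rightarrow>\<^sub>M count_space {1..Mb})"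

end

theory Submission
  imports Defs
begin

(* Unrolling the recursion gives X_(n+1) = a^n X_1 + Y_n - gamma, where Y_n = sum_k a^(n-k) Z_k
   is independent of X_1 and gamma, the accumulated effect of the controls, is a function of the
   n quantizer outputs and hence takes at most M^n values. So X_(n+1) in I, a subset of [l, u],
   confines X_1 to a union of at most M^n intervals of length (u - l) / a^n placed according to Y_n.
   If M < a their total length (M/a)^n (u - l) tends to 0; conditioning on Y_n and using the
   absolute continuity of the law of X_1 then gives P[X_(n+1) in I] --> 0, contradicting
   stabilizability in probability. *)

lemma linear_recurrence_closed_form:
  fixes x w :: "nat \<Rightarrow> 'a::comm_ring_1"
  assumes rec: "\<And>n. n \<ge> 1 \<Longrightarrow> x (Suc n) = a * x n + w n"
  shows "x (Suc m) = a ^ m * x 1 + (\<Sum>k=1..m. a ^ (m - k) * w k)"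
proof (induction m)
  case 0
  show ?case by simp
next
  case (Suc m)
  have "(\<Sum>k=1..m. a ^ (Suc m - k) * w k) = a * (\<Sum>k=1..m. a ^ (m - k) * w k)"
    by (simp add: sum_distrib_left Suc_diff_le mult.assoc)
  then show ?case
    using rec[of "Suc m"] Suc.IH by (simp add: sum.cl_ivl_Suc algebra_simps)
qed

definition qc_codeword :: "(nat \<Rightarrow> (nat \<Rightarrow> real) \<Rightarrow> nat) \<Rightarrow> nat \<Rightarrow> (nat \<Rightarrow> real) \<Rightarrow> nat \<Rightarrow> nat"
  where "qc_codeword f n x = restrict (\<lambda>k. f k (restrict x {1..k})) {1..n}"

lemma qc_control_eq: "qc_control f g n x = g n (qc_codeword f n x)"
  by (simp add: qc_control_def qc_codeword_def)

lemma restrict_qc_codeword: "k \<le> n \<Longrightarrow> restrict (qc_codeword f n x) {1..k} = qc_codeword f k x"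
  by (simp add: qc_codeword_def restrict_restrict Int_absorb1)

lemma qc_codeword_in_PiE:
  assumes "causal_quantizer Mb f"
  shows "qc_codeword f n x \<in> PiE {1..n} (\<lambda>_. {1..Mb})"
proof -
  have "f k (restrict x {1..k}) \<in> {1..Mb}" if "k \<ge> 1" for k
  proof -
    have "f k \<in> PiM {1..k} (\<lambda>_. borel) \<rightarrow>\<^sub>M count_space {1..Mb}"
      using assms that unfolding causal_quantizer_def by blast
    from measurable_space[OF this, of "restrict x {1..k}"] show ?thesis
      by (simp add: space_PiM)
  qed
  then show ?thesis
    unfolding qc_codeword_def by (simp add: Pi_iff)
qed

(* The total effect on X_(n+1) of the controls U_1, ..., U_n when the quantizer outputs are c. *)
definition qc_offset :: "real \<Rightarrow> (nat \<Rightarrow> (nat \<Rightarrow> nat) \<Rightarrow> real) \<Rightarrow> nat \<Rightarrow> (nat \<Rightarrow> nat) \<Rightarrow> real"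
  where "qc_offset a g n c = (\<Sum>k=1..n. a ^ (n - k) * g k (restrict c {1..k}))"

definition qc_offsets :: "real \<Rightarrow> (nat \<Rightarrow> (nat \<Rightarrow> nat) \<Rightarrow> real) \<Rightarrow> nat \<Rightarrow> nat \<Rightarrow> real set"
  where "qc_offsets a g Mb n = qc_offset a g n ` PiE {1..n} (\<lambda>_. {1..Mb})"

lemma finite_qc_offsets: "finite (qc_offsets a g Mb n)"
  by (simp add: qc_offsets_def finite_PiE)

lemma card_qc_offsets_le: "card (qc_offsets a g Mb n) \<le> Mb ^ n"
  using card_image_le[of "PiE {1..n} (\<lambda>_. {1..Mb})" "qc_offset a g n"]
  by (simp add: qc_offsets_def card_PiE finite_PiE)

lemma qc_closed_loop_state:
  assumes "causal_quantizer Mb f"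
    and "\<And>n. n \<ge> 1 \<Longrightarrow> x (Suc n) = a * x n + z n - qc_control f g n x"
  shows "\<exists>\<gamma>\<in>qc_offsets a g Mb m. x (Suc m) = a ^ m * x 1 + (\<Sum>k=1..m. a ^ (m - k) * z k) - \<gamma>"
proof
  have "x (Suc m) = a ^ m * x 1 + (\<Sum>k=1..m. a ^ (m - k) * (z k - qc_control f g k x))"
    using assms(2) by (intro linear_recurrence_closed_form) simp
  also have "(\<Sum>k=1..m. a ^ (m - k) * qc_control f g k x) = qc_offset a g m (qc_codeword f m x)"
    unfolding qc_offset_def qc_control_eq
    by (intro sum.cong refl, subst restrict_qc_codeword) auto
  ultimately show "x (Suc m) = a ^ m * x 1 + (\<Sum>k=1..m. a ^ (m - k) * z k) - qc_offset a g m (qc_codeword f m x)"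
    by (simp add: right_diff_distrib sum_subtractf)
  show "qc_offset a g m (qc_codeword f m x) \<in> qc_offsets a g Mb m"
    using qc_codeword_in_PiE[OF assms(1)] by (simp add: qc_offsets_def)
qed

lemma emeasure_lborel_affine_preimage_Icc:
  fixes b l u t :: real
  assumes "b > 0" "l \<le> u"
  shows "emeasure lborel {x. b * x + t \<in> {l..u}} = ennreal ((u - l) / b)"
proof -
  have "{x. b * x + t \<in> {l..u}} = {(l - t) / b .. (u - t) / b}"
    using \<open>b > 0\<close> by (auto simp: field_simps)
  moreover have "(u - t) / b - (l - t) / b = (u - l) / b"
    by (simp add: diff_divide_distrib)
  ultimately show ?thesis
    using assms by (simp add: divide_right_mono)
qed

definition parallel_strips :: "real \<Rightarrow> real set \<Rightarrow> real \<Rightarrow> real \<Rightarrow> (real \<times> real) set"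
  where "parallel_strips b \<Gamma> l u = {(x, y). \<exists>\<gamma>\<in>\<Gamma>. b * x + y - \<gamma> \<in> {l..u}}"

lemma sets_parallel_strips:
  assumes "finite \<Gamma>"
  shows "parallel_strips b \<Gamma> l u \<in> sets (borel \<Otimes>\<^sub>M borel)"
proof -
  have "parallel_strips b \<Gamma> l u
      = {p \<in> space (borel \<Otimes>\<^sub>M borel). \<exists>\<gamma>\<in>\<Gamma>. b * fst p + snd p - \<gamma> \<in> {l..u}}"
    by (auto simp: parallel_strips_def space_pair_measure)
  also have "\<dots> \<in> sets (borel \<Otimes>\<^sub>M borel)"
    using assms by measurable
  finally show ?thesis .
qed

lemma emeasure_lborel_section_parallel_strips_le:
  assumes "b > 0" "l \<le> u" "finite \<Gamma>" "card \<Gamma> \<le> N"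
  shows "emeasure lborel ((\<lambda>x. (x, y)) -` parallel_strips b \<Gamma> l u) \<le> ennreal (N * (u - l) / b)"
proof -
  have "emeasure lborel ((\<lambda>x. (x, y)) -` parallel_strips b \<Gamma> l u)
      = emeasure lborel (\<Union>\<gamma>\<in>\<Gamma>. {x. b * x + (y - \<gamma>) \<in> {l..u}})"
    by (intro arg_cong[where f="emeasure lborel"]) (auto simp: parallel_strips_def add_diff_eq)
  also have "\<dots> \<le> (\<Sum>\<gamma>\<in>\<Gamma>. emeasure lborel {x. b * x + (y - \<gamma>) \<in> {l..u}})"
    using assms(3) by (intro emeasure_subadditive_finite) auto
  also have "\<dots> = (\<Sum>\<gamma>\<in>\<Gamma>. ennreal ((u - l) / b))"
    using assms(1,2) by (intro sum.cong refl emeasure_lborel_affine_preimage_Icc)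
  also have "\<dots> = ennreal (card \<Gamma> * (u - l) / b)"
    using assms by (simp add: ennreal_of_nat_eq_real_of_nat ennreal_mult'[symmetric])
  also have "\<dots> \<le> ennreal (N * (u - l) / b)"
    using assms by (intro ennreal_leI divide_right_mono mult_right_mono) auto
  finally show ?thesis .
qed

lemma qc_closed_loop_state_in_parallel_strips:
  assumes "causal_quantizer Mb f"
    and "\<And>n. n \<ge> 1 \<Longrightarrow> x (Suc n) = a * x n + z n - qc_control f g n x"
    and "x (Suc m) \<in> {l..u}"
  shows "(x 1, \<Sum>k=1..m. a ^ (m - k) * z k) \<in> parallel_strips (a ^ m) (qc_offsets a g Mb m) l u"
  using qc_closed_loop_state[OF assms(1,2), of m] assms(3) by (auto simp: parallel_strips_def)

lemma nn_integral_upper_tail_small: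
  fixes h :: "'a \<Rightarrow> ennreal"
  assumes h[measurable]: "h \<in> borel_measurable N" and fin: "(\<integral>\<^sup>+ x. h x \<partial>N) < \<infinity>"
    and e: "0 < e"
  shows "\<exists>i::nat. (\<integral>\<^sup>+ x. h x * indicator {x. ennreal (real i) < h x} x \<partial>N) < e"
proof -
  define T where "T i x = h x * indicator {x. ennreal (real i) < h x} x" for i :: nat and x
  have T_measurable[measurable]: "T i \<in> borel_measurable N" for i
    unfolding T_def by measurable
  have T_decreasing: "T (Suc i) x \<le> T i x" for i x
    using le_less_trans[of "ennreal (real i)" "ennreal (real (Suc i))" "h x"]
    by (auto simp: T_def indicator_def ennreal_leI)
  have "(\<integral>\<^sup>+ x. T 0 x \<partial>N) \<le> (\<integral>\<^sup>+ x. h x \<partial>N)"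
    by (intro nn_integral_mono) (auto simp: T_def indicator_def)
  then have T0_finite: "(\<integral>\<^sup>+ x. T 0 x \<partial>N) < \<infinity>"
    using fin by order
  have T_vanishes: "(INF i. T i x) = 0" if finite_hx: "h x \<noteq> \<infinity>" for x
  proof -
    obtain r where "h x = ennreal r" using finite_hx by (cases "h x") auto
    moreover obtain i :: nat where "r < real i" using reals_Archimedean2 by blast
    ultimately have "T i x = 0" by (auto simp: T_def ennreal_less_iff)
    then show ?thesis by (metis INF_lower UNIV_I bot.extremum_uniqueI bot_ennreal)
  qed
  have "AE x in N. h x \<noteq> \<infinity>"
    using nn_integral_PInf_AE[OF h] fin by simp
  then have "AE x in N. (INF i. T i x) = 0"
    by (rule eventually_mono) (rule T_vanishes)
  then have "(\<integral>\<^sup>+ x. (INF i. T i x) \<partial>N) = 0"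
    by (simp add: nn_integral_0_iff_AE)
  moreover have "(\<integral>\<^sup>+ x. (INF i. T i x) \<partial>N) = (INF i. integral\<^sup>N N (T i))"
    using T_decreasing T0_finite by (intro nn_integral_monotone_convergence_INF_AE') auto
  ultimately have "(INF i. integral\<^sup>N N (T i)) < e"
    using e by simp
  then obtain i where "integral\<^sup>N N (T i) < e"
    by (auto simp: INF_less_iff)
  then show ?thesis
    unfolding T_def by blast
qed

lemma emeasure_density_small_on_small_sets:
  fixes h :: "'a \<Rightarrow> ennreal"
  assumes h[measurable]: "h \<in> borel_measurable N" and fin: "(\<integral>\<^sup>+ x. h x \<partial>N) < \<infinity>"
    and e: "0 < e"
  shows "\<exists>d>0. \<forall>S\<in>sets N. emeasure N S \<le> ennreal d \<longrightarrow> emeasure (density N h) S \<le> ennreal e"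
proof -
  \<comment> \<open>Below level i the density contributes at most i times the measure of S.\<close>
  obtain i :: nat where tail: "(\<integral>\<^sup>+ x. h x * indicator {x. ennreal (real i) < h x} x \<partial>N) < ennreal (e/2)"
    using nn_integral_upper_tail_small[OF h fin, of "ennreal (e/2)"] e by auto
  define d where "d = e / (2 * (real i + 1))"
  have d: "d > 0" "real i * d \<le> e/2"
    using e by (auto simp: d_def field_simps)
  show ?thesis
  proof (intro exI[of _ d] conjI d ballI impI)
    fix S assume S[measurable]: "S \<in> sets N" and small: "emeasure N S \<le> ennreal d"
    have "emeasure (density N h) S
        \<le> (\<integral>\<^sup>+ x. ennreal (real i) * indicator S x + h x * indicator {x. ennreal (real i) < h x} x \<partial>N)"
      by (auto simp: emeasure_density indicator_def not_less intro!: nn_integral_mono)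
    also have "\<dots> = ennreal (real i) * emeasure N S
        + (\<integral>\<^sup>+ x. h x * indicator {x. ennreal (real i) < h x} x \<partial>N)"
      by (simp add: nn_integral_add nn_integral_cmult_indicator)
    also have "\<dots> \<le> ennreal (real i) * ennreal d + ennreal (e/2)"
      by (intro add_mono mult_left_mono small less_imp_le[OF tail]) simp
    also have "\<dots> = ennreal (real i * d + e/2)"
      using d e by (simp add: ennreal_mult'' ennreal_plus[symmetric])
    also have "\<dots> \<le> ennreal e"
      using d by (intro ennreal_leI) simp
    finally show "emeasure (density N h) S \<le> ennreal e" .
  qed
qed

lemma (in prob_space) emeasure_indep_pair_le_sections:
  assumes indep: "indep_var S X T Y" and A: "A \<in> sets (S \<Otimes>\<^sub>M T)"
    and sections: "\<And>y. emeasure (distr M S X) ((\<lambda>x. (x, y)) -` A) \<le> e"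
  shows "emeasure M {\<omega> \<in> space M. (X \<omega>, Y \<omega>) \<in> A} \<le> e"
proof -
  have X[measurable]: "X \<in> measurable M S" and Y[measurable]: "Y \<in> measurable M T"
    using indep by (auto dest: indep_var_rv1 indep_var_rv2)
  interpret XY: pair_sigma_finite "distr M S X" "distr M T Y"
    by (intro pair_sigma_finite.intro prob_space_imp_sigma_finite prob_space_distr X Y)
  have "emeasure M {\<omega> \<in> space M. (X \<omega>, Y \<omega>) \<in> A}
      = emeasure (distr M (S \<Otimes>\<^sub>M T) (\<lambda>\<omega>. (X \<omega>, Y \<omega>))) A"
    using A by (subst emeasure_distr) (auto intro!: arg_cong[where f="emeasure M"])
  also have "\<dots> = emeasure (distr M S X \<Otimes>\<^sub>M distr M T Y) A"
    using indep by (simp add: indep_var_distribution_eq)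
  also have "\<dots> = (\<integral>\<^sup>+ y. emeasure (distr M S X) ((\<lambda>x. (x, y)) -` A) \<partial>distr M T Y)"
    using A by (intro XY.emeasure_pair_measure_alt2) simp
  also have "\<dots> \<le> (\<integral>\<^sup>+ y. e \<partial>distr M T Y)"
    by (intro nn_integral_mono sections)
  also have "\<dots> = e"
    using prob_space.emeasure_space_1[OF prob_space_distr[OF Y]] by simp
  finally show ?thesis .
qed

lemma (in prob_space) prob_indep_pair_tendsto_zero:
  fixes X :: "'a \<Rightarrow> real" and Y :: "nat \<Rightarrow> 'a \<Rightarrow> real"
    and A :: "nat \<Rightarrow> (real \<times> real) set" and s :: "nat \<Rightarrow> real"
  assumes dens: "distributed M lborel X h"
    and indep: "\<And>m. indep_var borel X borel (Y m)"
    and A: "\<And>m. A m \<in> sets (borel \<Otimes>\<^sub>M borel)"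
    and sections: "\<And>m y. emeasure lborel ((\<lambda>x. (x, y)) -` A m) \<le> ennreal (s m)"
    and s: "s \<longlonglongrightarrow> 0"
  shows "(\<lambda>m. prob {\<omega> \<in> space M. (X \<omega>, Y m \<omega>) \<in> A m}) \<longlonglongrightarrow> 0"
proof (rule order_tendstoI)
  fix e :: real assume "e > 0"
  have X[measurable]: "X \<in> borel_measurable M" and h[measurable]: "h \<in> borel_measurable lborel"
    and distr_X: "distr M borel X = density lborel h"
    using dens by (auto simp: distributed_def cong: distr_cong)
  have "(\<integral>\<^sup>+ x. h x \<partial>lborel) = emeasure (distr M borel X) UNIV"
    by (simp add: distr_X emeasure_density)
  also have "\<dots> = 1"
    using prob_space.emeasure_space_1[OF prob_space_distr[OF X]] by simp
  finally obtain d where "d > 0" and small: "\<And>S. S \<in> sets borel \<Longrightarrow> emeasure lborel S \<le> ennreal d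
      \<Longrightarrow> emeasure (distr M borel X) S \<le> ennreal (e/2)"
    using emeasure_density_small_on_small_sets[OF h _ half_gt_zero[OF \<open>e > 0\<close>]]
    by (auto simp: distr_X)
  have "eventually (\<lambda>m. s m < d) sequentially"
    using s \<open>d > 0\<close> by (rule order_tendstoD)
  then show "eventually (\<lambda>m. prob {\<omega> \<in> space M. (X \<omega>, Y m \<omega>) \<in> A m} < e) sequentially"
  proof (rule eventually_mono)
    fix m assume "s m < d"
    have "emeasure M {\<omega> \<in> space M. (X \<omega>, Y m \<omega>) \<in> A m} \<le> ennreal (e/2)"
    proof (rule emeasure_indep_pair_le_sections[OF indep A])
      fix y
      show "emeasure (distr M borel X) ((\<lambda>x. (x, y)) -` A m) \<le> ennreal (e/2)"
        using sections[of y m] ennreal_leI[OF less_imp_le[OF \<open>s m < d\<close>]] sets_Pair2[OF A]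
        by (intro small) (auto intro: order_trans)
    qed
    then show "prob {\<omega> \<in> space M. (X \<omega>, Y m \<omega>) \<in> A m} < e"
      using \<open>e > 0\<close> by (simp add: emeasure_eq_measure)
  qed
next
  fix e :: real assume "e < 0"
  then show "eventually (\<lambda>m. e < prob {\<omega> \<in> space M. (X \<omega>, Y m \<omega>) \<in> A m}) sequentially"
    by (simp add: less_le_trans[OF _ measure_nonneg])
qed

lemma (in prob_space) indep_var_weighted_sum:
  fixes V :: "nat \<Rightarrow> 'a \<Rightarrow> real"
  assumes indep: "indep_vars (\<lambda>_. borel) V UNIV" and "finite K" "i \<notin> K"
  shows "indep_var borel (V i) borel (\<lambda>\<omega>. \<Sum>k\<in>K. c k * V k \<omega>)"
proof -
  define W where "W k x = (if k = i then x else c k * x)" for k and x :: real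
  have "indep_vars (\<lambda>_. borel) (\<lambda>k \<omega>. W k (V k \<omega>)) UNIV"
    by (rule indep_vars_compose2[OF indep]) (simp add: W_def)
  then have "indep_vars (\<lambda>_. borel) (\<lambda>k \<omega>. W k (V k \<omega>)) (insert i K)"
    by (rule indep_vars_subset) simp
  then have "indep_var borel (\<lambda>\<omega>. W i (V i \<omega>)) borel (\<lambda>\<omega>. \<Sum>k\<in>K. W k (V k \<omega>))"
    using assms(2,3) by (rule indep_vars_sum[rotated 2])
  moreover have "(\<Sum>k\<in>K. W k (V k \<omega>)) = (\<Sum>k\<in>K. c k * V k \<omega>)" for \<omega>
    using \<open>i \<notin> K\<close> by (intro sum.cong) (auto simp: W_def)
  ultimately show ?thesis
    by (simp add: W_def)
qed

lemma (in prob_space) qc_closed_loop_prob_tendsto_zero: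
  fixes X Z :: "nat \<Rightarrow> 'a \<Rightarrow> real"
  assumes "real Mb < a"
    and indep: "indep_vars (\<lambda>_. borel) (\<lambda>i. if i = 0 then X 1 else Z i) UNIV"
    and dens: "distributed M lborel (X 1) h"
    and quant: "causal_quantizer Mb f"
    and dyn: "\<And>n \<omega>. n \<ge> 1 \<Longrightarrow> \<omega> \<in> space M \<Longrightarrow>
               X (Suc n) \<omega> = a * X n \<omega> + Z n \<omega> - qc_control f g n (\<lambda>i. X i \<omega>)"
    and "bounded I"
  shows "(\<lambda>m. prob {\<omega> \<in> space M. X (Suc m) \<omega> \<in> I}) \<longlonglongrightarrow> 0"
proof -
  obtain l u where I: "I \<subseteq> {l..u}" "l \<le> u"
    using \<open>bounded I\<close> by (fastforce simp: bounded_subset_cball cball_eq_atLeastAtMost)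
  have "a > 0"
    using \<open>real Mb < a\<close> of_nat_0_le_iff order_le_less_trans by blast
  define Y where "Y m = (\<lambda>\<omega>. \<Sum>k=1..m. a ^ (m - k) * Z k \<omega>)" for m
  define A where "A m = parallel_strips (a ^ m) (qc_offsets a g Mb m) l u" for m
  have indep_Y: "indep_var borel (X 1) borel (Y m)" for m
    using indep_var_weighted_sum[OF indep, of "{1..m}" 0 "\<lambda>k. a ^ (m - k)"] by (simp add: Y_def)
  have A[measurable]: "A m \<in> sets (borel \<Otimes>\<^sub>M borel)" for m
    unfolding A_def by (rule sets_parallel_strips[OF finite_qc_offsets])
  have "emeasure lborel ((\<lambda>x. (x, y)) -` A m) \<le> ennreal ((real Mb / a) ^ m * (u - l))" for m y
    using emeasure_lborel_section_parallel_strips_le[OF _ I(2) finite_qc_offsets card_qc_offsets_le]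
      \<open>a > 0\<close> by (simp add: A_def power_divide)
  moreover have "(\<lambda>m. (real Mb / a) ^ m * (u - l)) \<longlonglongrightarrow> 0"
    using \<open>real Mb < a\<close> \<open>a > 0\<close> by (intro tendsto_mult_left_zero LIMSEQ_power_zero) simp
  ultimately have lim: "(\<lambda>m. prob {\<omega> \<in> space M. (X 1 \<omega>, Y m \<omega>) \<in> A m}) \<longlonglongrightarrow> 0"
    by (intro prob_indep_pair_tendsto_zero[OF dens indep_Y A])
  have "prob {\<omega> \<in> space M. X (Suc m) \<omega> \<in> I} \<le> prob {\<omega> \<in> space M. (X 1 \<omega>, Y m \<omega>) \<in> A m}" for m
  proof (rule finite_measure_mono)
    have [measurable]: "X 1 \<in> borel_measurable M" "Y m \<in> borel_measurable M"
      using indep_var_rv1[OF indep_Y] indep_var_rv2[OF indep_Y] by auto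
    show "{\<omega> \<in> space M. (X 1 \<omega>, Y m \<omega>) \<in> A m} \<in> events"
      by measurable
    show "{\<omega> \<in> space M. X (Suc m) \<omega> \<in> I} \<subseteq> {\<omega> \<in> space M. (X 1 \<omega>, Y m \<omega>) \<in> A m}"
    proof safe
      fix \<omega> assume "\<omega> \<in> space M" "X (Suc m) \<omega> \<in> I"
      with dyn subsetD[OF I(1)] show "(X 1 \<omega>, Y m \<omega>) \<in> A m"
        using qc_closed_loop_state_in_parallel_strips[OF quant, of "\<lambda>i. X i \<omega>" a "\<lambda>k. Z k \<omega>" g m l u]
        by (simp add: A_def Y_def)
    qed
  qed
  then show ?thesis
    by (intro Lim_null_comparison[OF _ lim]) simp
qed

theorem theorem3:
  fixes P :: "'s measure"
    and a :: real and Mb :: nat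
    and X Z :: "nat \<Rightarrow> 's \<Rightarrow> real"
    and f :: "nat \<Rightarrow> (nat \<Rightarrow> real) \<Rightarrow> nat"
    and g :: "nat \<Rightarrow> (nat \<Rightarrow> nat) \<Rightarrow> real"
  assumes "prob_space P"
    and "a \<ge> 1"
    and indep: "prob_space.indep_vars P (\<lambda>_. borel) (\<lambda>i. if i = 0 then X 1 else Z i) UNIV"
    and dens: "\<exists>h. distributed P lborel (X 1) h"
    and quant: "causal_quantizer Mb f"
    and dyn: "\<And>n \<omega>. n \<ge> 1 \<Longrightarrow> \<omega> \<in> space P \<Longrightarrow>
               X (Suc n) \<omega> = a * X n \<omega> + Z n \<omega> - qc_control f g n (\<lambda>i. X i \<omega>)"
    and stab: "\<exists>I :: real set. bounded I \<and> is_interval I \<and>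
               limsup (\<lambda>n. ereal (measure P {\<omega> \<in> space P. X n \<omega> \<in> I})) > 0"
  shows "int Mb \<ge> \<lceil>a\<rceil>"
proof (rule ccontr)
  interpret prob_space P by fact
  assume "\<not> int Mb \<ge> \<lceil>a\<rceil>"
  then have "real Mb < a"
    by (simp add: ceiling_le_iff)
  obtain I where "bounded I" and recurrent: "limsup (\<lambda>n. ereal (prob {\<omega> \<in> space P. X n \<omega> \<in> I})) > 0"
    using stab by blast
  obtain h where dens_X1: "distributed P lborel (X 1) h"
    using dens by blast
  have "(\<lambda>m. prob {\<omega> \<in> space P. X (Suc m) \<omega> \<in> I}) \<longlonglongrightarrow> 0"
    by (rule qc_closed_loop_prob_tendsto_zero[OF \<open>real Mb < a\<close> indep dens_X1 quant dyn \<open>bounded I\<close>])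
  then have "(\<lambda>n. prob {\<omega> \<in> space P. X n \<omega> \<in> I}) \<longlonglongrightarrow> 0"
    by (rule LIMSEQ_imp_Suc)
  then have "limsup (\<lambda>n. ereal (prob {\<omega> \<in> space P. X n \<omega> \<in> I})) = 0"
    unfolding zero_ereal_def by (intro lim_imp_Limsup tendsto_ereal) simp_all
  with recurrent show False
    by simp
qed

end
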